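(* Let $p,q\ge1$, $\alpha:\mathbb Z_p\times\mathbb Z_q\to[0,1]$ a probability distribution with $\alpha(0,0)=0$, $\mathcal L_*(x)=\sum_{(i,j)}\alpha(p-i,q-j)(J_p^i\otimes J_q^j)x(J_p^i\otimes J_q^j)^*-x$ on $\mathcal M_p(\mathbb C)\otimes\mathcal M_q(\mathbb C)$, and $\mathcal T_{*t}=e^{t\mathcal L_*}$. Set $\alpha'(i,j)=\alpha(i,j)$ for $(i,j)\neq(0,0)$ and $\alpha'(0,0)=-1$, $\lambda_{kl}=\sum_{i,j}\alpha'(i,j)\overline\omega_p^{ik}\overline\omega_q^{jl}$ and $\Phi_{m,n}(t)=\sum_{k,l}\omega_p^{mk}\omega_q^{nl}e^{t\lambda_{kl}}$. Then: (i) for all $(i,j),(i',j')\in\mathbb Z_p\times\mathbb Z_q$ and $t\ge0$, $$\mathcal T_{*t}(|e_i\otimes e_j\rangle\langle e_{i'}\otimes e_{j'}|)=\frac{1}{pq}\sum_{m,n}\Phi_{m,n}(t)|e_{m+i}\otimes e_{n+j}\rangle\langle e_{m+i'}\otimes e_{n+j'}|,$$ and the functions $\Phi_{m,n}(t)$ are real-valued; (ii) $\Omega_t=\frac{1}{pq}\sum_{m,n}\Phi_{m,n}(t)|u_{mn}\rangle\langle u_{mn}|$, where $u_{mn}=\frac{1}{\sqrt{pq}}\sum_{i,j}(e_i\otimes e_j)\otimes(e_{m+i}\otimes e_{n+j})$.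
   Context: $\{e_j\}$ canonical bases of $\mathbb C^p,\mathbb C^q$ (indices mod $p$, $q$); $J_p=\sum_j|e_j\rangle\langle e_{j+1}|$, similarly $J_q$; $\omega_p,\omega_q$ primitive roots of unity of orders $p,q$; arguments of $\alpha$ mod $p,q$. With $\rho=\frac{1}{pq}\mathbf 1$, $\Omega_\rho=\frac{1}{\sqrt{pq}}\sum_{i,j}(e_i\otimes e_j)\otimes(e_i\otimes e_j)\in(\mathbb C^p\otimes\mathbb C^q)^{\otimes2}$ and $\Omega_t=(\mathrm{id}\otimes\mathcal T_{*t})(|\Omega_\rho\rangle\langle\Omega_\rho|)$. *)

theory Defs
  imports "HOL-Analysis.Analysis"
begin

text \<open>Operators on a finite-dimensional Hilbert space with orthonormal basis indexed by
  a finite set I are represented by their matrix entries, functions 'i => 'i => complex;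
  vectors by functions 'i => complex.  The basis of C^p (x) C^q is e_a (x) e_b, indexed by
  pairs (a,b) with a < p, b < q.\<close>

definition idx :: "nat \<Rightarrow> nat \<Rightarrow> (nat \<times> nat) set" where
  "idx p q = {..<p} \<times> {..<q}"

definition mmul :: "'i set \<Rightarrow> ('i \<Rightarrow> 'i \<Rightarrow> complex) \<Rightarrow> ('i \<Rightarrow> 'i \<Rightarrow> complex) \<Rightarrow> ('i \<Rightarrow> 'i \<Rightarrow> complex)" where
  "mmul I A B = (\<lambda>r c. \<Sum>k\<in>I. A r k * B k c)"

definition ident :: "'i \<Rightarrow> 'i \<Rightarrow> complex" where
  "ident = (\<lambda>r c. if r = c then 1 else 0)"

definition mpow :: "'i set \<Rightarrow> ('i \<Rightarrow> 'i \<Rightarrow> complex) \<Rightarrow> nat \<Rightarrow> ('i \<Rightarrow> 'i \<Rightarrow> complex)" where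
  "mpow I A n = ((\<lambda>X. mmul I A X) ^^ n) ident"

definition adj :: "('i \<Rightarrow> 'i \<Rightarrow> complex) \<Rightarrow> ('i \<Rightarrow> 'i \<Rightarrow> complex)" where
  "adj A = (\<lambda>r c. cnj (A c r))"

definition kron :: "(nat \<Rightarrow> nat \<Rightarrow> complex) \<Rightarrow> (nat \<Rightarrow> nat \<Rightarrow> complex) \<Rightarrow> (nat \<times> nat \<Rightarrow> nat \<times> nat \<Rightarrow> complex)" where
  "kron A B = (\<lambda>(a, b) (c, d). A a c * B b d)"

definition Jm :: "nat \<Rightarrow> nat \<Rightarrow> nat \<Rightarrow> complex" where
  "Jm p = (\<lambda>a b. if b = (a + 1) mod p then 1 else 0)"

definition Ushift :: "nat \<Rightarrow> nat \<Rightarrow> nat \<Rightarrow> nat \<Rightarrow> (nat \<times> nat \<Rightarrow> nat \<times> nat \<Rightarrow> complex)" where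
  "Ushift p q i j = kron (mpow {..<p} (Jm p) i) (mpow {..<q} (Jm q) j)"

definition Lstar :: "nat \<Rightarrow> nat \<Rightarrow> (nat \<Rightarrow> nat \<Rightarrow> real)
    \<Rightarrow> (nat \<times> nat \<Rightarrow> nat \<times> nat \<Rightarrow> complex) \<Rightarrow> (nat \<times> nat \<Rightarrow> nat \<times> nat \<Rightarrow> complex)" where
  "Lstar p q \<alpha> x = (\<lambda>r c.
     (\<Sum>(i, j)\<in>idx p q. complex_of_real (\<alpha> ((p - i) mod p) ((q - j) mod q)) *
        mmul (idx p q) (mmul (idx p q) (Ushift p q i j) x) (adj (Ushift p q i j)) r c) - x r c)"

definition Tstar :: "nat \<Rightarrow> nat \<Rightarrow> (nat \<Rightarrow> nat \<Rightarrow> real) \<Rightarrow> real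
    \<Rightarrow> (nat \<times> nat \<Rightarrow> nat \<times> nat \<Rightarrow> complex) \<Rightarrow> (nat \<times> nat \<Rightarrow> nat \<times> nat \<Rightarrow> complex)" where
  "Tstar p q \<alpha> t x = (\<lambda>r c. \<Sum>n. complex_of_real (t ^ n / fact n) * ((Lstar p q \<alpha> ^^ n) x) r c)"

definition ketbra :: "nat \<Rightarrow> nat \<Rightarrow> nat \<times> nat \<Rightarrow> nat \<times> nat \<Rightarrow> (nat \<times> nat \<Rightarrow> nat \<times> nat \<Rightarrow> complex)" where
  "ketbra p q = (\<lambda>(i, j) (i', j') r c.
      if r = (i mod p, j mod q) \<and> c = (i' mod p, j' mod q) then 1 else 0)"

definition alpha' :: "(nat \<Rightarrow> nat \<Rightarrow> real) \<Rightarrow> nat \<Rightarrow> nat \<Rightarrow> real" where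
  "alpha' \<alpha> i j = (if (i, j) = (0, 0) then -1 else \<alpha> i j)"

definition lam :: "nat \<Rightarrow> nat \<Rightarrow> (nat \<Rightarrow> nat \<Rightarrow> real) \<Rightarrow> complex \<Rightarrow> complex \<Rightarrow> nat \<Rightarrow> nat \<Rightarrow> complex" where
  "lam p q \<alpha> \<omega>p \<omega>q k l = (\<Sum>(i, j)\<in>idx p q.
      complex_of_real (alpha' \<alpha> i j) * cnj \<omega>p ^ (i * k) * cnj \<omega>q ^ (j * l))"

definition Phi :: "nat \<Rightarrow> nat \<Rightarrow> (nat \<Rightarrow> nat \<Rightarrow> real) \<Rightarrow> complex \<Rightarrow> complex \<Rightarrow> nat \<Rightarrow> nat \<Rightarrow> real \<Rightarrow> complex" where
  "Phi p q \<alpha> \<omega>p \<omega>q m n t = (\<Sum>(k, l)\<in>idx p q.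
      \<omega>p ^ (m * k) * \<omega>q ^ (n * l) * exp (complex_of_real t * lam p q \<alpha> \<omega>p \<omega>q k l))"

definition primitive_root :: "nat \<Rightarrow> complex \<Rightarrow> bool" where
  "primitive_root p \<omega> \<longleftrightarrow> \<omega> ^ p = 1 \<and> (\<forall>k. 0 < k \<and> k < p \<longrightarrow> \<omega> ^ k \<noteq> 1)"

definition Omega_rho :: "nat \<Rightarrow> nat \<Rightarrow> (nat \<times> nat) \<times> (nat \<times> nat) \<Rightarrow> complex" where
  "Omega_rho p q = (\<lambda>(x, y). if x = y then complex_of_real (1 / sqrt (real (p * q))) else 0)"

definition u_vec :: "nat \<Rightarrow> nat \<Rightarrow> nat \<Rightarrow> nat \<Rightarrow> (nat \<times> nat) \<times> (nat \<times> nat) \<Rightarrow> complex" where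
  "u_vec p q m n = (\<lambda>((a, b), (c, d)).
     if (c, d) = ((m + a) mod p, (n + b) mod q) then complex_of_real (1 / sqrt (real (p * q))) else 0)"

definition outer :: "('i \<Rightarrow> complex) \<Rightarrow> ('i \<Rightarrow> complex) \<Rightarrow> ('i \<Rightarrow> 'i \<Rightarrow> complex)" where
  "outer v w = (\<lambda>r c. v r * cnj (w c))"

definition id_tensor :: "(('j \<Rightarrow> 'j \<Rightarrow> complex) \<Rightarrow> ('j \<Rightarrow> 'j \<Rightarrow> complex))
    \<Rightarrow> ('i \<times> 'j \<Rightarrow> 'i \<times> 'j \<Rightarrow> complex) \<Rightarrow> ('i \<times> 'j \<Rightarrow> 'i \<times> 'j \<Rightarrow> complex)" where
  "id_tensor S X = (\<lambda>(r1, r2) (c1, c2). S (\<lambda>a b. X (r1, a) (c1, b)) r2 c2)"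

definition Omega_t :: "nat \<Rightarrow> nat \<Rightarrow> (nat \<Rightarrow> nat \<Rightarrow> real) \<Rightarrow> real
    \<Rightarrow> (nat \<times> nat) \<times> (nat \<times> nat) \<Rightarrow> (nat \<times> nat) \<times> (nat \<times> nat) \<Rightarrow> complex" where
  "Omega_t p q \<alpha> t = id_tensor (Tstar p q \<alpha> t) (outer (Omega_rho p q) (Omega_rho p q))"

end

theory Submission
  imports Defs "HOL-Number_Theory.Cong"
begin

(* The generator L_* commutes with the translations of Z_p \<times> Z_q, so the Fourier transform
   diagonalises it: for frequencies kl the matrices E_kl = \<Sum>_d \<chi>_kl(d) |x+d\<rangle>\<langle>y+d| satisfy
   L_* E_kl = \<lambda>_kl E_kl, and orthogonality of characters gives |x\<rangle>\<langle>y| = (pq)\<inverse> \<Sum>_kl E_kl.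
   Summing the exponential series mode by mode, T_*t |x\<rangle>\<langle>y| = (pq)\<inverse> \<Sum>_kl e^{t \<lambda>_kl} E_kl,
   which regroups into the \<Phi>_mn. As \<alpha> is real, \<lambda> at the negated frequency is the conjugate
   of \<lambda>_kl, so the reindexing kl \<mapsto> -kl shows that \<Phi>_mn is real. For (ii), each block of
   |\<Omega>_\<rho>\<rangle>\<langle>\<Omega>_\<rho>| is a matrix unit scaled by (pq)\<inverse>, and T_*t acts blockwise. *)

lemma root_of_unity_pow_mod:
  fixes w :: complex
  assumes "w ^ p = 1"
  shows "w ^ n = w ^ (n mod p)"
proof -
  have "w ^ n = (w ^ p) ^ (n div p) * w ^ (n mod p)"
    by (metis div_mult_mod_eq power_add power_mult mult.commute)
  with assms show ?thesis
    by simp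
qed

lemma root_of_unity_pow_cong:
  fixes w :: complex
  assumes "w ^ p = 1" "[a = b] (mod p)"
  shows "w ^ a = w ^ b"
  using assms root_of_unity_pow_mod[OF assms(1)] unfolding cong_def by metis

lemma root_of_unity_pow_neg:
  fixes w :: complex
  assumes "w ^ p = 1" "k \<le> p"
  shows "w ^ (((p - k) mod p) * x) = cnj (w ^ (k * x))"
proof (cases "p = 0")
  case True
  with assms show ?thesis
    by simp
next
  case False
  then have "norm w = 1"
    using power_eq_1_iff[OF assms(1)] by auto
  then have "w * cnj w = 1"
    using complex_norm_square[of w] by simp
  then have cnj_w: "cnj w = inverse w"
    by (simp add: inverse_unique)
  have "w ^ k * w ^ ((p - k) mod p) = w ^ k * w ^ (p - k)"
    using root_of_unity_pow_mod[OF assms(1), of "p - k"] by simp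
  also have "\<dots> = 1"
    using assms by (simp flip: power_add)
  finally have inv: "inverse (w ^ k) = w ^ ((p - k) mod p)"
    by (rule inverse_unique)
  show ?thesis
    by (simp add: power_mult cnj_w power_inverse flip: inv)
qed

lemma primitive_root_sum_powers:
  fixes w :: complex
  assumes "primitive_root p w" "d < p"
  shows "(\<Sum>k<p. w ^ (d * k)) = (if d = 0 then of_nat p else 0)"
proof (cases "d = 0")
  case False
  then have "w ^ d \<noteq> 1"
    using assms unfolding primitive_root_def by simp
  have "(\<Sum>k<p. w ^ (d * k)) = (\<Sum>k<p. (w ^ d) ^ k)"
    by (simp add: power_mult)
  also have "\<dots> = ((w ^ d) ^ p - 1) / (w ^ d - 1)"
    by (rule geometric_sum) fact
  also have "(w ^ d) ^ p = 1"
    using assms(1) unfolding primitive_root_def by (metis mult.commute power_mult power_one)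
  finally show ?thesis
    using False by simp
qed simp

lemma sums_exp_sum:
  fixes f z :: "'k \<Rightarrow> complex"
  shows "(\<lambda>n. complex_of_real (t ^ n / fact n) * (\<Sum>k\<in>K. f k * z k ^ n))
    sums (\<Sum>k\<in>K. f k * exp (complex_of_real t * z k))"
proof -
  have "(\<lambda>n. \<Sum>k\<in>K. f k * ((complex_of_real t * z k) ^ n /\<^sub>R fact n))
      sums (\<Sum>k\<in>K. f k * exp (complex_of_real t * z k))"
    by (intro sums_sum sums_mult exp_converges)
  moreover have "complex_of_real (t ^ n / fact n) * (\<Sum>k\<in>K. f k * z k ^ n)
      = (\<Sum>k\<in>K. f k * ((complex_of_real t * z k) ^ n /\<^sub>R fact n))" for n
    by (simp add: sum_distrib_left scaleR_conv_of_real power_mult_distrib divide_inverse mult_ac)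
  ultimately show ?thesis
    by simp
qed

definition idx_add :: "nat \<Rightarrow> nat \<Rightarrow> nat \<times> nat \<Rightarrow> nat \<times> nat \<Rightarrow> nat \<times> nat" where
  "idx_add p q r d = ((fst r + fst d) mod p, (snd r + snd d) mod q)"

definition idx_neg :: "nat \<Rightarrow> nat \<Rightarrow> nat \<times> nat \<Rightarrow> nat \<times> nat" where
  "idx_neg p q d = ((p - fst d) mod p, (q - snd d) mod q)"

lemma finite_idx [simp]: "finite (idx p q)"
  by (simp add: idx_def)

lemma idx_add_in_idx: "p \<ge> 1 \<Longrightarrow> q \<ge> 1 \<Longrightarrow> idx_add p q r d \<in> idx p q"
  by (simp add: idx_add_def idx_def)

lemma idx_add_right_cancel:
  assumes "r \<in> idx p q" "s \<in> idx p q"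
  shows "idx_add p q r d = idx_add p q s d \<longleftrightarrow> r = s"
  using assms cong_add_rcancel_nat[of "fst r" "fst d" "fst s" p]
    cong_add_rcancel_nat[of "snd r" "snd d" "snd s" q]
  by (auto simp: idx_add_def idx_def cong_def prod_eq_iff)

lemma sum_idx_add_reindex:
  assumes "p \<ge> 1" "q \<ge> 1"
  shows "(\<Sum>r\<in>idx p q. f (idx_add p q r d)) = (\<Sum>r\<in>idx p q. f r)"
proof -
  have inj: "inj_on (\<lambda>r. idx_add p q r d) (idx p q)"
    by (rule inj_onI) (simp add: idx_add_right_cancel)
  have "(\<lambda>r. idx_add p q r d) ` idx p q = idx p q"
    by (rule endo_inj_surj[OF finite_idx _ inj]) (use idx_add_in_idx[OF assms] in blast)
  then show ?thesis
    using sum.reindex[OF inj, of f] by simp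
qed

lemma idx_neg_idx_neg: "r \<in> idx p q \<Longrightarrow> idx_neg p q (idx_neg p q r) = r"
  by (cases "fst r = 0"; cases "snd r = 0") (auto simp: idx_neg_def idx_def)

lemma sum_idx_neg_reindex: "(\<Sum>r\<in>idx p q. f (idx_neg p q r)) = (\<Sum>r\<in>idx p q. f r)"
  by (intro sum.reindex_bij_witness[where i = "idx_neg p q" and j = "idx_neg p q"])
    (auto simp: idx_neg_idx_neg, auto simp: idx_neg_def idx_def)

lemma mpow_Jm:
  assumes "p \<ge> 1" "a < p"
  shows "mpow {..<p} (Jm p) i a b = (if b = (a + i) mod p then 1 else 0)"
  using assms(2)
proof (induction i arbitrary: a)
  case 0
  then show ?case
    by (simp add: mpow_def ident_def)
next
  case (Suc i)
  have "mpow {..<p} (Jm p) (Suc i) a b = (\<Sum>k<p. Jm p a k * mpow {..<p} (Jm p) i k b)"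
    by (simp add: mpow_def mmul_def)
  also have "\<dots> = (\<Sum>k<p. if k = (a + 1) mod p then mpow {..<p} (Jm p) i k b else 0)"
    by (rule sum.cong) (auto simp: Jm_def)
  also have "\<dots> = mpow {..<p} (Jm p) i ((a + 1) mod p) b"
    using assms(1) by simp
  also have "\<dots> = (if b = (a + Suc i) mod p then 1 else 0)"
    using Suc.IH[of "(a + 1) mod p"] assms(1) by (simp add: mod_add_left_eq)
  finally show ?case .
qed

lemma Ushift_apply:
  assumes "p \<ge> 1" "q \<ge> 1" "r \<in> idx p q"
  shows "Ushift p q i j r k = (if k = idx_add p q r (i, j) then 1 else 0)"
  using assms mpow_Jm[OF assms(1)] mpow_Jm[OF assms(2)]
  by (cases r; cases k) (auto simp: Ushift_def kron_def idx_add_def idx_def)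

lemma Ushift_conj_apply:
  assumes "p \<ge> 1" "q \<ge> 1" "r \<in> idx p q" "c \<in> idx p q"
  shows "mmul (idx p q) (mmul (idx p q) (Ushift p q i j) x) (adj (Ushift p q i j)) r c
    = x (idx_add p q r (i, j)) (idx_add p q c (i, j))"
proof -
  have row: "mmul (idx p q) (Ushift p q i j) x r k = x (idx_add p q r (i, j)) k" for k
  proof -
    have "mmul (idx p q) (Ushift p q i j) x r k
        = (\<Sum>s\<in>idx p q. if s = idx_add p q r (i, j) then x s k else 0)"
      unfolding mmul_def by (rule sum.cong) (auto simp: Ushift_apply[OF assms(1-3)])
    then show ?thesis
      using idx_add_in_idx[OF assms(1,2)] by simp
  qed
  have "mmul (idx p q) (mmul (idx p q) (Ushift p q i j) x) (adj (Ushift p q i j)) r c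
      = (\<Sum>s\<in>idx p q. if s = idx_add p q c (i, j) then x (idx_add p q r (i, j)) s else 0)"
    unfolding mmul_def[of _ "mmul _ _ _"] adj_def row
    by (rule sum.cong) (auto simp: Ushift_apply[OF assms(1,2,4)])
  then show ?thesis
    using idx_add_in_idx[OF assms(1,2)] by simp
qed

lemma Lstar_apply:
  assumes "p \<ge> 1" "q \<ge> 1" "r \<in> idx p q" "c \<in> idx p q"
  shows "Lstar p q \<alpha> x r c =
    (\<Sum>d\<in>idx p q. complex_of_real (case_prod \<alpha> (idx_neg p q d)) *
        x (idx_add p q r d) (idx_add p q c d)) - x r c"
  unfolding Lstar_def by (simp add: Ushift_conj_apply[OF assms] idx_neg_def split_def)

definition character :: "complex \<Rightarrow> complex \<Rightarrow> nat \<times> nat \<Rightarrow> nat \<times> nat \<Rightarrow> complex" where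
  "character wp wq kl d = wp ^ (fst d * fst kl) * wq ^ (snd d * snd kl)"

lemma character_commute: "character wp wq kl d = character wp wq d kl"
  by (simp add: character_def mult.commute)

lemma Phi_eq_sum_character:
  "Phi p q \<alpha> wp wq m n t = (\<Sum>kl\<in>idx p q.
     character wp wq kl (m, n) * exp (complex_of_real t * case_prod (lam p q \<alpha> wp wq) kl))"
  by (simp add: Phi_def character_def split_def)

definition shifted_ketbra :: "nat \<Rightarrow> nat \<Rightarrow> nat \<times> nat \<Rightarrow> nat \<times> nat \<Rightarrow> nat \<times> nat
    \<Rightarrow> nat \<times> nat \<Rightarrow> nat \<times> nat \<Rightarrow> complex" where
  "shifted_ketbra p q x y d =
     ketbra p q (fst d + fst x, snd d + snd x) (fst d + fst y, snd d + snd y)"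

lemma shifted_ketbra_idx_add:
  assumes "r \<in> idx p q" "c \<in> idx p q"
  shows "shifted_ketbra p q x y (idx_add p q d e) (idx_add p q r e) (idx_add p q c e)
    = shifted_ketbra p q x y d r c"
proof -
  have p: "((fst d + fst e) mod p + a) mod p = (fst d + a + fst e) mod p" for a
    by (simp add: mod_simps add_ac)
  have q: "((snd d + snd e) mod q + a) mod q = (snd d + a + snd e) mod q" for a
    by (simp add: mod_simps add_ac)
  show ?thesis
    using assms cong_add_rcancel_nat[unfolded cong_def]
    by (simp add: shifted_ketbra_def ketbra_def idx_add_def idx_def p q prod_eq_iff mem_Times_iff)
qed

lemma inverse_sqrt_mult_cnj:
  "complex_of_real (1 / sqrt (real n)) * cnj (complex_of_real (1 / sqrt (real n)))
    = complex_of_real (1 / real n)"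
  by (simp add: real_sqrt_mult_self flip: of_real_mult)

lemma outer_Omega_rho_block:
  assumes "(a, b) \<in> idx p q" "(c, d) \<in> idx p q"
  shows "(\<lambda>x y. outer (Omega_rho p q) (Omega_rho p q) ((a, b), x) ((c, d), y))
    = (\<lambda>x y. complex_of_real (1 / real (p * q)) * ketbra p q (a, b) (c, d) x y)"
  using assms inverse_sqrt_mult_cnj[of "p * q"]
  by (auto simp: outer_def Omega_rho_def ketbra_def idx_def fun_eq_iff)

lemma outer_u_vec:
  "outer (u_vec p q m n) (u_vec p q m n) ((a, b), (e, f)) ((c, d), (g, h))
    = complex_of_real (1 / real (p * q)) * shifted_ketbra p q (a, b) (c, d) (m, n) (e, f) (g, h)"
  using inverse_sqrt_mult_cnj[of "p * q"]
  by (auto simp: outer_def u_vec_def shifted_ketbra_def ketbra_def)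

lemma Omega_t_apply:
  assumes "(a, b) \<in> idx p q" "(c, d) \<in> idx p q"
  shows "Omega_t p q \<alpha> t ((a, b), (e, f)) ((c, d), (g, h)) = Tstar p q \<alpha> t
    (\<lambda>x y. complex_of_real (1 / real (p * q)) * ketbra p q (a, b) (c, d) x y) (e, f) (g, h)"
  unfolding Omega_t_def id_tensor_def using outer_Omega_rho_block[OF assms] by simp

context
  fixes p q :: nat and \<alpha> :: "nat \<Rightarrow> nat \<Rightarrow> real" and wp wq :: complex
  assumes p_pos: "p \<ge> 1" and q_pos: "q \<ge> 1" and \<alpha>_00: "\<alpha> 0 0 = 0"
    and prim_p: "primitive_root p wp" and prim_q: "primitive_root q wq"
begin

lemma character_idx_add:
  "character wp wq kl (idx_add p q d e) = character wp wq kl d * character wp wq kl e"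
proof -
  have "wp ^ (((fst d + fst e) mod p) * fst kl) = wp ^ ((fst d + fst e) * fst kl)"
    using prim_p by (intro root_of_unity_pow_cong[of wp p])
      (simp_all add: primitive_root_def cong_def mod_mult_left_eq)
  moreover have "wq ^ (((snd d + snd e) mod q) * snd kl) = wq ^ ((snd d + snd e) * snd kl)"
    using prim_q by (intro root_of_unity_pow_cong[of wq q])
      (simp_all add: primitive_root_def cong_def mod_mult_left_eq)
  ultimately have "character wp wq kl (idx_add p q d e)
      = wp ^ ((fst d + fst e) * fst kl) * wq ^ ((snd d + snd e) * snd kl)"
    by (simp add: character_def idx_add_def)
  also have "\<dots> = character wp wq kl d * character wp wq kl e"
    by (simp add: character_def algebra_simps power_add)
  finally show ?thesis .
qed

lemma character_idx_neg:
  "d \<in> idx p q \<Longrightarrow> character wp wq kl (idx_neg p q d) = cnj (character wp wq kl d)"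
  using root_of_unity_pow_neg[of wp p "fst d" "fst kl"] root_of_unity_pow_neg[of wq q "snd d" "snd kl"]
    prim_p prim_q
  by (auto simp: character_def idx_neg_def idx_def primitive_root_def)

lemma character_idx_neg_left:
  "kl \<in> idx p q \<Longrightarrow> character wp wq (idx_neg p q kl) d = cnj (character wp wq kl d)"
  using character_idx_neg[of kl d] by (simp add: character_commute)

lemma sum_character:
  assumes "d \<in> idx p q"
  shows "(\<Sum>kl\<in>idx p q. character wp wq kl d) = (if d = (0, 0) then of_nat (p * q) else 0)"
proof -
  have "(\<Sum>kl\<in>idx p q. character wp wq kl d)
      = (\<Sum>k<p. wp ^ (fst d * k)) * (\<Sum>l<q. wq ^ (snd d * l))"
    unfolding character_def idx_def sum_product sum.cartesian_product by (simp add: split_def)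
  then show ?thesis
    using assms primitive_root_sum_powers[OF prim_p, of "fst d"]
      primitive_root_sum_powers[OF prim_q, of "snd d"]
    by (cases d) (auto simp: idx_def)
qed

lemma lam_eq_sum_cnj_character:
  "case_prod (lam p q \<alpha> wp wq) kl =
     (\<Sum>d\<in>idx p q. complex_of_real (case_prod (alpha' \<alpha>) d) * cnj (character wp wq kl d))"
  by (simp add: lam_def character_def split_def mult.assoc)

lemma lam_eq_sum_character:
  "case_prod (lam p q \<alpha> wp wq) kl =
     (\<Sum>d\<in>idx p q. complex_of_real (case_prod \<alpha> (idx_neg p q d)) * character wp wq kl d) - 1"
proof -
  have "(0, 0) \<in> idx p q"
    using p_pos q_pos by (simp add: idx_def)
  then have "(\<Sum>d\<in>idx p q. complex_of_real (case_prod (alpha' \<alpha>) d) * cnj (character wp wq kl d))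
      = (\<Sum>d\<in>idx p q. complex_of_real (case_prod \<alpha> d) * cnj (character wp wq kl d)) - 1"
    by (simp add: alpha'_def \<alpha>_00 sum.remove[of "idx p q" "(0, 0)"] split_def character_def
        if_distrib cong: if_cong)
  moreover have "(\<Sum>d\<in>idx p q. complex_of_real (case_prod \<alpha> d) * cnj (character wp wq kl d))
      = (\<Sum>d\<in>idx p q. complex_of_real (case_prod \<alpha> (idx_neg p q d)) * character wp wq kl d)"
    by (subst sum_idx_neg_reindex[symmetric])
      (auto simp: idx_neg_idx_neg character_idx_neg intro!: sum.cong)
  ultimately show ?thesis
    by (simp add: lam_eq_sum_cnj_character)
qed

lemma cnj_lam:
  "kl \<in> idx p q \<Longrightarrow>
    cnj (case_prod (lam p q \<alpha> wp wq) kl) = case_prod (lam p q \<alpha> wp wq) (idx_neg p q kl)"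
  unfolding lam_eq_sum_cnj_character by (simp add: character_idx_neg_left)

definition eigenmatrix :: "nat \<times> nat \<Rightarrow> nat \<times> nat \<Rightarrow> nat \<times> nat
    \<Rightarrow> nat \<times> nat \<Rightarrow> nat \<times> nat \<Rightarrow> complex" where
  "eigenmatrix x y kl r c = (\<Sum>d\<in>idx p q. character wp wq kl d * shifted_ketbra p q x y d r c)"

lemma eigenmatrix_idx_add:
  assumes "r \<in> idx p q" "c \<in> idx p q"
  shows "eigenmatrix x y kl (idx_add p q r e) (idx_add p q c e)
    = character wp wq kl e * eigenmatrix x y kl r c"
proof -
  have "eigenmatrix x y kl (idx_add p q r e) (idx_add p q c e)
      = (\<Sum>d\<in>idx p q. character wp wq kl (idx_add p q d e) *
           shifted_ketbra p q x y (idx_add p q d e) (idx_add p q r e) (idx_add p q c e))"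
    unfolding eigenmatrix_def using p_pos q_pos by (rule sum_idx_add_reindex[symmetric])
  also have "\<dots> = (\<Sum>d\<in>idx p q.
      character wp wq kl e * (character wp wq kl d * shifted_ketbra p q x y d r c))"
    by (simp add: character_idx_add shifted_ketbra_idx_add assms mult_ac)
  finally show ?thesis
    by (simp add: eigenmatrix_def sum_distrib_left)
qed

lemma Lstar_eigenmatrix:
  assumes "r \<in> idx p q" "c \<in> idx p q"
  shows "Lstar p q \<alpha> (eigenmatrix x y kl) r c
    = case_prod (lam p q \<alpha> wp wq) kl * eigenmatrix x y kl r c"
  by (simp add: Lstar_apply[OF p_pos q_pos assms] eigenmatrix_idx_add[OF assms]
      lam_eq_sum_character right_diff_distrib sum_distrib_left mult_ac)

lemma ketbra_eq_sum_eigenmatrix: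
  "ketbra p q x y r c
    = complex_of_real (1 / real (p * q)) * (\<Sum>kl\<in>idx p q. eigenmatrix x y kl r c)"
proof -
  have "(\<Sum>kl\<in>idx p q. eigenmatrix x y kl r c)
      = (\<Sum>d\<in>idx p q. (\<Sum>kl\<in>idx p q. character wp wq kl d) * shifted_ketbra p q x y d r c)"
    unfolding eigenmatrix_def sum_distrib_right by (rule sum.swap)
  also have "\<dots> = (\<Sum>d\<in>idx p q.
      if d = (0, 0) then of_nat (p * q) * shifted_ketbra p q x y d r c else 0)"
    by (rule sum.cong) (simp_all add: sum_character)
  also have "\<dots> = of_nat (p * q) * shifted_ketbra p q x y (0, 0) r c"
    using p_pos q_pos by (simp add: idx_def)
  also have "shifted_ketbra p q x y (0, 0) = ketbra p q x y"
    by (simp add: shifted_ketbra_def)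
  finally show ?thesis
    using p_pos q_pos by simp
qed

lemma Lstar_pow_eigenmatrix_combination:
  assumes "\<forall>r\<in>idx p q. \<forall>c\<in>idx p q.
      X r c = (\<Sum>kl\<in>idx p q. a kl * eigenmatrix x y kl r c)"
    and "r \<in> idx p q" "c \<in> idx p q"
  shows "(Lstar p q \<alpha> ^^ n) X r c =
    (\<Sum>kl\<in>idx p q. a kl * case_prod (lam p q \<alpha> wp wq) kl ^ n * eigenmatrix x y kl r c)"
  using assms
proof (induction n arbitrary: X a r c)
  case 0
  then show ?case
    by simp
next
  case (Suc n)
  let ?lam = "case_prod (lam p q \<alpha> wp wq)"
  have "\<forall>r\<in>idx p q. \<forall>c\<in>idx p q.
      Lstar p q \<alpha> X r c = (\<Sum>kl\<in>idx p q. (a kl * ?lam kl) * eigenmatrix x y kl r c)"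
  proof (intro ballI)
    fix r c
    assume rc: "r \<in> idx p q" "c \<in> idx p q"
    have "Lstar p q \<alpha> X r c
        = (\<Sum>kl\<in>idx p q. a kl * Lstar p q \<alpha> (eigenmatrix x y kl) r c)"
      using Suc.prems(1) rc idx_add_in_idx[OF p_pos q_pos]
      by (simp add: Lstar_apply[OF p_pos q_pos rc] sum_distrib_left right_diff_distrib
          sum_subtractf mult_ac) (rule sum.swap)
    then show "Lstar p q \<alpha> X r c
        = (\<Sum>kl\<in>idx p q. (a kl * ?lam kl) * eigenmatrix x y kl r c)"
      by (simp add: Lstar_eigenmatrix rc mult_ac)
  qed
  from Suc.IH[OF this Suc.prems(2,3)] show ?case
    by (simp only: funpow_Suc_right comp_apply) (simp add: mult_ac)
qed

lemma Tstar_eigenmatrix_combination: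
  assumes "\<forall>r\<in>idx p q. \<forall>c\<in>idx p q.
      X r c = (\<Sum>kl\<in>idx p q. a kl * eigenmatrix x y kl r c)"
    and "r \<in> idx p q" "c \<in> idx p q"
  shows "Tstar p q \<alpha> t X r c = (\<Sum>kl\<in>idx p q.
    a kl * exp (complex_of_real t * case_prod (lam p q \<alpha> wp wq) kl) * eigenmatrix x y kl r c)"
proof -
  have "(\<lambda>n. complex_of_real (t ^ n / fact n) * (Lstar p q \<alpha> ^^ n) X r c) sums
      (\<Sum>kl\<in>idx p q. (a kl * eigenmatrix x y kl r c) *
         exp (complex_of_real t * case_prod (lam p q \<alpha> wp wq) kl))"
    using sums_exp_sum[where f = "\<lambda>kl. a kl * eigenmatrix x y kl r c"
        and z = "case_prod (lam p q \<alpha> wp wq)" and K = "idx p q" and t = t]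
    by (simp add: Lstar_pow_eigenmatrix_combination[OF assms] mult_ac)
  then show ?thesis
    unfolding Tstar_def by (simp add: sums_iff mult_ac)
qed

lemma sum_exp_eigenmatrix:
  "(\<Sum>kl\<in>idx p q.
      exp (complex_of_real t * case_prod (lam p q \<alpha> wp wq) kl) * eigenmatrix x y kl r c)
    = (\<Sum>d\<in>idx p q. Phi p q \<alpha> wp wq (fst d) (snd d) t * shifted_ketbra p q x y d r c)"
  unfolding eigenmatrix_def Phi_eq_sum_character sum_distrib_left sum_distrib_right
  by (subst sum.swap) (simp add: mult_ac)

lemma Tstar_scaled_ketbra:
  assumes "r \<in> idx p q" "c \<in> idx p q"
  shows "Tstar p q \<alpha> t (\<lambda>r c. s * ketbra p q x y r c) r c =
    s * (complex_of_real (1 / real (p * q)) *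
      (\<Sum>d\<in>idx p q. Phi p q \<alpha> wp wq (fst d) (snd d) t * shifted_ketbra p q x y d r c))"
proof -
  have "\<forall>r\<in>idx p q. \<forall>c\<in>idx p q. s * ketbra p q x y r c =
      (\<Sum>kl\<in>idx p q. s * complex_of_real (1 / real (p * q)) * eigenmatrix x y kl r c)"
    by (simp add: ketbra_eq_sum_eigenmatrix sum_distrib_left mult.assoc)
  then have "Tstar p q \<alpha> t (\<lambda>r c. s * ketbra p q x y r c) r c =
      (\<Sum>kl\<in>idx p q. s * complex_of_real (1 / real (p * q)) *
         exp (complex_of_real t * case_prod (lam p q \<alpha> wp wq) kl) * eigenmatrix x y kl r c)"
    by (rule Tstar_eigenmatrix_combination[OF _ assms])
  also have "\<dots> = s * (complex_of_real (1 / real (p * q)) * (\<Sum>kl\<in>idx p q.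
      exp (complex_of_real t * case_prod (lam p q \<alpha> wp wq) kl) * eigenmatrix x y kl r c))"
    by (simp add: sum_distrib_left mult.assoc)
  finally show ?thesis
    by (simp only: sum_exp_eigenmatrix)
qed

lemma Tstar_ketbra:
  assumes "r \<in> idx p q" "c \<in> idx p q"
  shows "Tstar p q \<alpha> t (ketbra p q x y) r c = complex_of_real (1 / real (p * q)) *
    (\<Sum>(m, n)\<in>idx p q. Phi p q \<alpha> wp wq m n t *
       ketbra p q (m + fst x, n + snd x) (m + fst y, n + snd y) r c)"
  using Tstar_scaled_ketbra[OF assms, where s = 1] by (simp add: shifted_ketbra_def split_def)

lemma Omega_t_eq:
  assumes "R \<in> idx p q \<times> idx p q" "C \<in> idx p q \<times> idx p q"
  shows "Omega_t p q \<alpha> t R C = complex_of_real (1 / real (p * q)) *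
    (\<Sum>(m, n)\<in>idx p q. Phi p q \<alpha> wp wq m n t * outer (u_vec p q m n) (u_vec p q m n) R C)"
proof -
  obtain a b e f c d g h where RC: "R = ((a, b), (e, f))" "C = ((c, d), (g, h))"
    and in_idx: "(a, b) \<in> idx p q" "(e, f) \<in> idx p q" "(c, d) \<in> idx p q" "(g, h) \<in> idx p q"
    using assms by (metis mem_Times_iff prod.collapse)
  show ?thesis
    unfolding RC Omega_t_apply[OF in_idx(1,3)] Tstar_scaled_ketbra[OF in_idx(2,4)] outer_u_vec
    by (simp add: split_def sum_distrib_left mult_ac)
qed

lemma Phi_real: "Im (Phi p q \<alpha> wp wq m n t) = 0"
proof -
  have "cnj (Phi p q \<alpha> wp wq m n t) = (\<Sum>kl\<in>idx p q. character wp wq (idx_neg p q kl) (m, n) *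
      exp (complex_of_real t * case_prod (lam p q \<alpha> wp wq) (idx_neg p q kl)))"
    unfolding Phi_eq_sum_character cnj_sum
    by (intro sum.cong) (simp_all add: character_idx_neg_left cnj_lam exp_cnj)
  also have "\<dots> = Phi p q \<alpha> wp wq m n t"
    unfolding Phi_eq_sum_character by (rule sum_idx_neg_reindex)
  finally have "Im (cnj (Phi p q \<alpha> wp wq m n t)) = Im (Phi p q \<alpha> wp wq m n t)"
    by simp
  then show ?thesis
    by simp
qed

end

(* Only \<alpha>(0,0) = 0 is used: the formulas hold for any real weights, not only for
   probability distributions, and for every real t. *)
theorem mainTheorem9:
  fixes p q :: nat and \<alpha> :: "nat \<Rightarrow> nat \<Rightarrow> real" and \<omega>p \<omega>q :: complex
  assumes "p \<ge> 1" and "q \<ge> 1"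
    and "\<forall>(i, j)\<in>idx p q. 0 \<le> \<alpha> i j \<and> \<alpha> i j \<le> 1"
    and "(\<Sum>(i, j)\<in>idx p q. \<alpha> i j) = 1"
    and "\<alpha> 0 0 = 0"
    and "primitive_root p \<omega>p" and "primitive_root q \<omega>q"
  shows "(\<forall>ij\<in>idx p q. \<forall>ij'\<in>idx p q. \<forall>t::real. t \<ge> 0 \<longrightarrow>
            (\<forall>r\<in>idx p q. \<forall>c\<in>idx p q.
              Tstar p q \<alpha> t (ketbra p q ij ij') r c =
              complex_of_real (1 / real (p * q)) *
              (\<Sum>(m, n)\<in>idx p q. Phi p q \<alpha> \<omega>p \<omega>q m n t *
                 ketbra p q (m + fst ij, n + snd ij) (m + fst ij', n + snd ij') r c)))
       \<and> (\<forall>(m, n)\<in>idx p q. \<forall>t::real. t \<ge> 0 \<longrightarrow> Im (Phi p q \<alpha> \<omega>p \<omega>q m n t) = 0)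
       \<and> (\<forall>t::real. t \<ge> 0 \<longrightarrow>
            (\<forall>R\<in>idx p q \<times> idx p q. \<forall>C\<in>idx p q \<times> idx p q.
              Omega_t p q \<alpha> t R C =
              complex_of_real (1 / real (p * q)) *
              (\<Sum>(m, n)\<in>idx p q. Phi p q \<alpha> \<omega>p \<omega>q m n t *
                 outer (u_vec p q m n) (u_vec p q m n) R C)))"
proof -
  note hyps = assms(1,2,5,6,7)
  show ?thesis
    using Tstar_ketbra[of p q \<alpha> \<omega>p \<omega>q, OF hyps] Phi_real[of p q \<alpha> \<omega>p \<omega>q, OF hyps]
      Omega_t_eq[of p q \<alpha> \<omega>p \<omega>q, OF hyps]
    by blast
qed

end
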